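(* For every partial abstraction $A$ and every expression $e$ (containing no $\&i$ markers, abstraction variables, or holes), every mapping $l$ with $\textsc{LambdaUnify}(A,e)\rightsquigarrow l$ is well-formed, i.e. $\mathrm{WFMap}(l)$ holds.
   Context: Expressions: $e ::= \lambda.\,e\mid(e\ e)\mid\$i\mid\&i\mid t$ with de Bruijn indices $\$i$ ($i\in\mathbb{N}$), overshifted markers $\&i$ ($i\in\mathbb{Z}$) and primitives $t$. Partial abstractions: $A ::= \lambda.\,A\mid(A\ A)\mid\$i\mid t\mid\alpha\mid ??_j$ with abstraction variables $\alpha$ and uniquely indexed holes $??_j$. Downshift: $\downarrow_d(\lambda.b)=\lambda.\downarrow_{d+1}b$; $\downarrow_d(f\ x)=(\downarrow_d f)(\downarrow_d x)$; $\downarrow_d\$i=\$i$ if $i<d$, $\$(i-1)$ if $i>d$, $\&(i-1)$ if $i=d$; $\downarrow_d\&i=\&(i-1)$; $\downarrow_d t=t$. A mapping is a finite map from abstraction variables and holes to expressions; $\textsc{DownshiftAll}(l)$ applies $\downarrow_0$ to every expression in $l$; $\mathrm{merge}(l_1,l_2)$ is the union of $l_1$ and $l_2$, undefined if some key is bound to two different expressions. $\textsc{LambdaUnify}$ is the relation given by the rules: $\textsc{LambdaUnify}(\alpha,e)\rightsquigarrow[\alpha\to e]$; $\textsc{LambdaUnify}(??_i,e)\rightsquigarrow[??_i\to e]$; if $\textsc{LambdaUnify}(A_1,e_1)\rightsquigarrow l_1$, $\textsc{LambdaUnify}(A_2,e_2)\rightsquigarrow l_2$ and $l=\mathrm{merge}(l_1,l_2)$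 is defined, then $\textsc{LambdaUnify}((A_1\ A_2),(e_1\ e_2))\rightsquigarrow l$; if $\textsc{LambdaUnify}(A,e)\rightsquigarrow l'$ then $\textsc{LambdaUnify}(\lambda.A,\lambda.e)\rightsquigarrow\textsc{DownshiftAll}(l')$; and $\textsc{LambdaUnify}(e,e)\rightsquigarrow[\,]$ (for $A$ equal to an expression $e$ with no holes or abstraction variables). Well-formedness: $\mathrm{WF}_d(\lambda.b)=\mathrm{WF}_{d+1}(b)$; $\mathrm{WF}_d(f\ x)=\mathrm{WF}_d(f)\wedge\mathrm{WF}_d(x)$; $\mathrm{WF}_d(\$i)$ true; $\mathrm{WF}_d(\&i)$ true iff $i<d$; $\mathrm{WF}_d(t)$ true. $\mathrm{WFMap}(l)$ means every expression in the range of $l$ satisfies $\mathrm{WF}_0$. *)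

theory Defs
  imports Main
begin

text \<open>Expressions: lambda, application, de Bruijn index, overshifted marker, primitive.\<close>
datatype 'p expr = Lam "'p expr" | App "'p expr" "'p expr" | Var nat | Over int | Prim 'p

datatype ('p, 'v) pabs = PLam "('p, 'v) pabs" | PApp "('p, 'v) pabs" "('p, 'v) pabs"
  | PVar nat | PPrim 'p | AVar 'v | Hole nat

datatype 'v key = KAVar 'v | KHole nat

type_synonym ('p, 'v) mapping = "'v key \<Rightarrow> 'p expr option"

fun downshift :: "nat \<Rightarrow> 'p expr \<Rightarrow> 'p expr" where
  "downshift d (Lam b) = Lam (downshift (Suc d) b)"
| "downshift d (App f x) = App (downshift d f) (downshift d x)"
| "downshift d (Var i) = (if i < d then Var i else if i > d then Var (i - 1) else Over (int i - 1))"
| "downshift d (Over i) = Over (i - 1)"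
| "downshift d (Prim t) = Prim t"

definition downshift_all :: "('p, 'v) mapping \<Rightarrow> ('p, 'v) mapping" where
  "downshift_all l = (\<lambda>k. map_option (downshift 0) (l k))"

text \<open>merge is defined iff the two mappings agree on their common keys; it is then the union.\<close>
definition merge_defined :: "('p, 'v) mapping \<Rightarrow> ('p, 'v) mapping \<Rightarrow> bool" where
  "merge_defined l1 l2 = (\<forall>k \<in> dom l1 \<inter> dom l2. l1 k = l2 k)"

definition merge :: "('p, 'v) mapping \<Rightarrow> ('p, 'v) mapping \<Rightarrow> ('p, 'v) mapping" where
  "merge l1 l2 = l1 ++ l2"

fun pabs_to_expr :: "('p, 'v) pabs \<Rightarrow> 'p expr option" where
  "pabs_to_expr (PLam a) = map_option Lam (pabs_to_expr a)"
| "pabs_to_expr (PApp a b) = (case (pabs_to_expr a, pabs_to_expr b) of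
      (Some x, Some y) \<Rightarrow> Some (App x y) | _ \<Rightarrow> None)"
| "pabs_to_expr (PVar i) = Some (Var i)"
| "pabs_to_expr (PPrim t) = Some (Prim t)"
| "pabs_to_expr (AVar v) = None"
| "pabs_to_expr (Hole j) = None"

inductive lambda_unify :: "('p, 'v) pabs \<Rightarrow> 'p expr \<Rightarrow> ('p, 'v) mapping \<Rightarrow> bool" where
  unify_avar: "lambda_unify (AVar v) e [KAVar v \<mapsto> e]"
| unify_hole: "lambda_unify (Hole i) e [KHole i \<mapsto> e]"
| unify_app: "lambda_unify A1 e1 l1 \<Longrightarrow> lambda_unify A2 e2 l2 \<Longrightarrow> merge_defined l1 l2
    \<Longrightarrow> lambda_unify (PApp A1 A2) (App e1 e2) (merge l1 l2)"
| unify_lam: "lambda_unify A e l' \<Longrightarrow> lambda_unify (PLam A) (Lam e) (downshift_all l')"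
| unify_refl: "pabs_to_expr A = Some e \<Longrightarrow> lambda_unify A e Map.empty"

fun wf :: "nat \<Rightarrow> 'p expr \<Rightarrow> bool" where
  "wf d (Lam b) = wf (Suc d) b"
| "wf d (App f x) = (wf d f \<and> wf d x)"
| "wf d (Var i) = True"
| "wf d (Over i) = (i < int d)"
| "wf d (Prim t) = True"

definition wf_map :: "('p, 'v) mapping \<Rightarrow> bool" where
  "wf_map l = (\<forall>e \<in> ran l. wf 0 e)"

fun no_over :: "'p expr \<Rightarrow> bool" where
  "no_over (Lam b) = no_over b"
| "no_over (App f x) = (no_over f \<and> no_over x)"
| "no_over (Var i) = True"
| "no_over (Over i) = False"
| "no_over (Prim t) = True"

end

theory Submission
  imports Defs
begin

text \<open>The claim becomes inductive once it is stated for an arbitrary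
  binder depth \<open>d\<close>: a downshift turns a term well-formed under \<open>d + 1\<close> binders into one
  well-formed under \<open>d\<close> binders, which is exactly what the \<open>\<lambda>\<close>-rule needs.\<close>

lemma wf_downshift: "wf (Suc d) x \<Longrightarrow> k \<le> d \<Longrightarrow> wf d (downshift k x)"
  by (induction k x arbitrary: d rule: downshift.induct) auto

lemma no_over_imp_wf: "no_over x \<Longrightarrow> wf d x"
  by (induction x arbitrary: d) auto

lemma ran_merge: "ran (merge l1 l2) \<subseteq> ran l1 \<union> ran l2"
  unfolding merge_def by (auto simp: ran_def map_add_def split: option.splits)

lemma ran_downshift_all: "ran (downshift_all l) = downshift 0 ` ran l"
  unfolding downshift_all_def ran_def by (auto split: option.splits)

lemma lambda_unify_preserves_wf:
  assumes "lambda_unify A e l" and "wf d e"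
  shows "\<forall>v \<in> ran l. wf d v"
  using assms
proof (induction arbitrary: d rule: lambda_unify.induct)
  case (unify_app A1 e1 l1 A2 e2 l2)
  from unify_app.prems have "wf d e1" and "wf d e2" by simp_all
  then have "\<forall>v \<in> ran l1 \<union> ran l2. wf d v"
    using unify_app.IH by blast
  then show ?case using ran_merge by blast
next
  case (unify_lam A e l')
  from unify_lam.prems have "wf (Suc d) e" by simp
  then have "\<forall>v \<in> ran l'. wf (Suc d) v" by (rule unify_lam.IH)
  then show ?case by (simp add: ran_downshift_all wf_downshift)
qed simp_all

theorem lemmaB4:
  fixes A :: "('p, 'v) pabs" and e :: "'p expr" and l :: "('p, 'v) mapping"
  assumes "no_over e"
    and "lambda_unify A e l"
  shows "wf_map l"
  using lambda_unify_preserves_wf[OF assms(2) no_over_imp_wf[OF assms(1)]]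
  unfolding wf_map_def .

end
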